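(* Let $Q$ be a conjunctive query without self-joins that is connected, non-boolean, and contains no universal attribute and no vacuum relation. Then $Q$ contains a hard structure.
   Context: CQ $Q(\mathbf{A}) :- R_1(\mathbb{A}_1),\dots,R_p(\mathbb{A}_p)$ with distinct relation symbols, $\mathrm{attr}(R_i)=\mathbb{A}_i$, $\mathrm{attr}(Q)=\bigcup_i\mathbb{A}_i$, $\mathrm{head}(Q)=\mathbf{A}$. $Q$ is boolean if $\mathbf{A}=\emptyset$; connected if the graph on relations, with edges between relations sharing an attribute, is connected; a relation is vacuum if its attribute set is empty; an attribute is universal if it lies in $\mathbf{A}$ and in every $\mathbb{A}_i$. Standing assumption: distinct relations have distinct attribute sets. $R_j$ is exogenous if another relation $R_i$ has $\mathrm{attr}(R_i)\subsetneq\mathrm{attr}(R_j)$, endogenous otherwise. A path between relations using only attributes in $S$ is a sequence of relations with consecutive ones sharing an attribute of $S$. Triad-like structure: three endogenous relations such that each pair is joined by a path using only attributes in $\mathrm{attr}(Q)\setminus(\mathrm{head}(Q)\cup\mathrm{attr}(R))$, $R$ the third. $R_j$ is dominated by $R_i$ if (1) $\mathrm{attr}(R_i)\subseteq\mathrm{attr}(R_j)$; (2) for every $R_k$ with $\mathrm{attr}(R_i)\setminus\mathrm{attr}(R_k)\ne\emptyset$, $\mathrm{attr}(R_j)\cap\mathrm{attr}(R_k)\subseteq\mathrm{attr}(R_i)\cap\mathrm{head}(Q)$; (3) $\mathrm{attr}(R_i)\subseteq\mathrm{head}(Q)$ or $\mathrm{head}(Q)\subseteq\mathrm{attr}(R_i)$;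 non-dominated relations are dominated by no other relation. Strand: two non-dominated relations $R_i,R_j$ with $\mathrm{head}(Q)\cap\mathrm{attr}(R_i)\ne\mathrm{head}(Q)\cap\mathrm{attr}(R_j)$ and $(\mathrm{attr}(R_i)\cap\mathrm{attr}(R_j))\setminus\mathrm{head}(Q)\ne\emptyset$. The head join of non-dominated relations is the full query of non-dominated relations restricted to $\mathrm{head}(Q)$; a full query is hierarchical if for all attributes $A,B$ the sets of relations containing them are nested or disjoint. $Q$ contains a hard structure if it has a triad-like structure or a strand, or the head join of its non-dominated relations is non-hierarchical. *)

theory Defs
  imports Main
begin

text \<open>A conjunctive query without self-joins is represented by a finite nonempty set
  I of relation symbols (distinct by construction), the attribute map att giving
  attr(R_i), and the head attribute set H.  attr(Q) is the union of all att i.\<close>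

definition attrQ :: "'r set \<Rightarrow> ('r \<Rightarrow> 'a set) \<Rightarrow> 'a set" where
  "attrQ I att = (\<Union>i\<in>I. att i)"

definition wf_cq :: "'r set \<Rightarrow> ('r \<Rightarrow> 'a set) \<Rightarrow> 'a set \<Rightarrow> bool" where
  "wf_cq I att H \<longleftrightarrow> finite I \<and> I \<noteq> {} \<and> (\<forall>i\<in>I. finite (att i))
     \<and> inj_on att I \<and> H \<subseteq> attrQ I att"

definition is_boolean :: "'a set \<Rightarrow> bool" where
  "is_boolean H \<longleftrightarrow> H = {}"

definition is_path :: "'r set \<Rightarrow> ('r \<Rightarrow> 'a set) \<Rightarrow> 'a set \<Rightarrow> 'r list \<Rightarrow> bool" where
  "is_path I att S xs \<longleftrightarrow> xs \<noteq> [] \<and> set xs \<subseteq> I \<and>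
     (\<forall>k. Suc k < length xs \<longrightarrow> att (xs ! k) \<inter> att (xs ! Suc k) \<inter> S \<noteq> {})"

definition path_between :: "'r set \<Rightarrow> ('r \<Rightarrow> 'a set) \<Rightarrow> 'a set \<Rightarrow> 'r \<Rightarrow> 'r \<Rightarrow> bool" where
  "path_between I att S i j \<longleftrightarrow> (\<exists>xs. is_path I att S xs \<and> hd xs = i \<and> last xs = j)"

definition connected_cq :: "'r set \<Rightarrow> ('r \<Rightarrow> 'a set) \<Rightarrow> bool" where
  "connected_cq I att \<longleftrightarrow> (\<forall>i\<in>I. \<forall>j\<in>I. path_between I att UNIV i j)"

definition vacuum :: "('r \<Rightarrow> 'a set) \<Rightarrow> 'r \<Rightarrow> bool" where
  "vacuum att i \<longleftrightarrow> att i = {}"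

definition universal_attr :: "'r set \<Rightarrow> ('r \<Rightarrow> 'a set) \<Rightarrow> 'a set \<Rightarrow> 'a \<Rightarrow> bool" where
  "universal_attr I att H A \<longleftrightarrow> A \<in> H \<and> (\<forall>i\<in>I. A \<in> att i)"

definition exogenous :: "'r set \<Rightarrow> ('r \<Rightarrow> 'a set) \<Rightarrow> 'r \<Rightarrow> bool" where
  "exogenous I att j \<longleftrightarrow> (\<exists>i\<in>I. att i \<subset> att j)"

definition endogenous :: "'r set \<Rightarrow> ('r \<Rightarrow> 'a set) \<Rightarrow> 'r \<Rightarrow> bool" where
  "endogenous I att j \<longleftrightarrow> j \<in> I \<and> \<not> exogenous I att j"

definition triad_like :: "'r set \<Rightarrow> ('r \<Rightarrow> 'a set) \<Rightarrow> 'a set \<Rightarrow> bool" where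
  "triad_like I att H \<longleftrightarrow> (\<exists>r1 r2 r3.
     r1 \<noteq> r2 \<and> r2 \<noteq> r3 \<and> r1 \<noteq> r3 \<and>
     endogenous I att r1 \<and> endogenous I att r2 \<and> endogenous I att r3 \<and>
     path_between I att (attrQ I att - (H \<union> att r3)) r1 r2 \<and>
     path_between I att (attrQ I att - (H \<union> att r1)) r2 r3 \<and>
     path_between I att (attrQ I att - (H \<union> att r2)) r1 r3)"

text \<open>dominated_by I att H j i: R_j is dominated by R_i.\<close>
definition dominated_by :: "'r set \<Rightarrow> ('r \<Rightarrow> 'a set) \<Rightarrow> 'a set \<Rightarrow> 'r \<Rightarrow> 'r \<Rightarrow> bool" where
  "dominated_by I att H j i \<longleftrightarrow>
     att i \<subseteq> att j \<and>
     (\<forall>k\<in>I. att i - att k \<noteq> {} \<longrightarrow> att j \<inter> att k \<subseteq> att i \<inter> H) \<and>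
     (att i \<subseteq> H \<or> H \<subseteq> att i)"

definition non_dominated :: "'r set \<Rightarrow> ('r \<Rightarrow> 'a set) \<Rightarrow> 'a set \<Rightarrow> 'r \<Rightarrow> bool" where
  "non_dominated I att H j \<longleftrightarrow> j \<in> I \<and> \<not> (\<exists>i\<in>I. i \<noteq> j \<and> dominated_by I att H j i)"

definition strand :: "'r set \<Rightarrow> ('r \<Rightarrow> 'a set) \<Rightarrow> 'a set \<Rightarrow> bool" where
  "strand I att H \<longleftrightarrow> (\<exists>i j. non_dominated I att H i \<and> non_dominated I att H j \<and>
     H \<inter> att i \<noteq> H \<inter> att j \<and> (att i \<inter> att j) - H \<noteq> {})"

definition hierarchical :: "'r set \<Rightarrow> ('r \<Rightarrow> 'a set) \<Rightarrow> bool" where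
  "hierarchical J b \<longleftrightarrow> (\<forall>A B.
     let RA = {i\<in>J. A \<in> b i}; RB = {i\<in>J. B \<in> b i} in
     RA \<subseteq> RB \<or> RB \<subseteq> RA \<or> RA \<inter> RB = {})"

definition head_join_hierarchical :: "'r set \<Rightarrow> ('r \<Rightarrow> 'a set) \<Rightarrow> 'a set \<Rightarrow> bool" where
  "head_join_hierarchical I att H \<longleftrightarrow>
     hierarchical {i. non_dominated I att H i} (\<lambda>i. att i \<inter> H)"

definition hard_structure :: "'r set \<Rightarrow> ('r \<Rightarrow> 'a set) \<Rightarrow> 'a set \<Rightarrow> bool" where
  "hard_structure I att H \<longleftrightarrow>
     triad_like I att H \<or> strand I att H \<or> \<not> head_join_hierarchical I att H"

end

theory Submission
  imports Defs
begin

text \<open>Suppose Q has neither a strand nor a non-hierarchical head join. Pick a head attribute A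
  occurring in as many non-dominated relations as possible. By hierarchy and maximality these
  relations share no head attribute with the remaining non-dominated relations, and since there
  is no strand they share no other attribute either. Dominated relations only meet the outside
  world through their dominator, so the relations that contain A or are dominated by one that
  does form a block sharing no attribute with the rest of Q. A relation missing A (there is one,
  as A is not universal) lies below a non-dominated relation outside the block, contradicting
  connectedness.\<close>

lemma dominated_by_trans:
  assumes "dominated_by I att H j i" "dominated_by I att H i l"
  shows "dominated_by I att H j l"
proof -
  have "att l \<subseteq> att i" "att i \<subseteq> att j" "att l \<subseteq> H \<or> H \<subseteq> att l"
    using assms unfolding dominated_by_def by auto
  moreover have "att j \<inter> att k \<subseteq> att l \<inter> H" if "k \<in> I" "att l - att k \<noteq> {}" for k
  proof -
    have "att i - att k \<noteq> {}" using that(2) \<open>att l \<subseteq> att i\<close> by blast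
    then have "att j \<inter> att k \<subseteq> att i \<inter> H"
      using assms(1) that(1) unfolding dominated_by_def by blast
    moreover have "att i \<inter> att k \<subseteq> att l \<inter> H"
      using assms(2) that unfolding dominated_by_def by blast
    ultimately show ?thesis by blast
  qed
  ultimately show ?thesis unfolding dominated_by_def by blast
qed

lemma ex_non_dominated_below:
  assumes wf: "wf_cq I att H" and "j \<in> I"
  shows "\<exists>i. non_dominated I att H i \<and> (i = j \<or> dominated_by I att H j i)"
  using \<open>j \<in> I\<close>
proof (induction "card (att j)" arbitrary: j rule: less_induct)
  case less
  show ?case
  proof (cases "non_dominated I att H j")
    case False
    then obtain i where i: "i \<in> I" "i \<noteq> j" "dominated_by I att H j i"
      using less.prems unfolding non_dominated_def by blast
    have "att i \<subset> att j"
      using i wf less.prems unfolding dominated_by_def wf_cq_def inj_on_def by blast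
    then have "card (att i) < card (att j)"
      using wf less.prems unfolding wf_cq_def by (meson psubset_card_mono)
    then obtain l where "non_dominated I att H l" "l = i \<or> dominated_by I att H i l"
      using less.hyps i(1) by blast
    then show ?thesis using i(3) dominated_by_trans by metis
  qed blast
qed

lemma dominated_by_disjoint:
  assumes "dominated_by I att H j i" "k \<in> I" "att i \<noteq> {}" "att i \<inter> att k = {}"
  shows "att j \<inter> att k = {}"
  using assms unfolding dominated_by_def by blast

lemma ex_non_dominated_meets_head:
  assumes wf: "wf_cq I att H" and "H \<noteq> {}" and nonvac: "\<forall>i\<in>I. att i \<noteq> {}"
  shows "\<exists>i. non_dominated I att H i \<and> att i \<inter> H \<noteq> {}"
proof -
  obtain A j where j: "A \<in> H" "j \<in> I" "A \<in> att j"
    using wf \<open>H \<noteq> {}\<close> unfolding wf_cq_def attrQ_def by blast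
  obtain i where i: "non_dominated I att H i" "i = j \<or> dominated_by I att H j i"
    using ex_non_dominated_below[OF wf j(2)] by blast
  have "att i \<noteq> {}" using i(1) nonvac unfolding non_dominated_def by blast
  then show ?thesis using i j unfolding dominated_by_def by blast
qed

lemma ex_most_frequent:
  assumes "finite J"
  shows "\<exists>A. \<forall>B. card {i\<in>J. B \<in> b i} \<le> card {i\<in>J. A \<in> b i}"
proof -
  have "card {i\<in>J. B \<in> b i} < Suc (card J)" for B
    using card_mono[OF assms, of "{i\<in>J. B \<in> b i}"] by auto
  then show ?thesis
    using ex_has_greatest_nat[where P = "\<lambda>_. True" and f = "\<lambda>B. card {i\<in>J. B \<in> b i}"]
    by blast
qed

lemma hierarchical_most_frequent_disjoint:
  assumes hier: "hierarchical J b" and "finite J"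
    and most: "\<And>B. card {i\<in>J. B \<in> b i} \<le> card {i\<in>J. A \<in> b i}"
    and i: "i \<in> J" "A \<in> b i" and k: "k \<in> J" "A \<notin> b k"
  shows "b i \<inter> b k = {}"
proof (rule ccontr)
  assume "b i \<inter> b k \<noteq> {}"
  then obtain B where B: "B \<in> b i" "B \<in> b k" by blast
  let ?RA = "{i\<in>J. A \<in> b i}" and ?RB = "{i\<in>J. B \<in> b i}"
  have "?RA \<subseteq> ?RB \<or> ?RB \<subseteq> ?RA \<or> ?RA \<inter> ?RB = {}"
    using hier unfolding hierarchical_def Let_def by blast
  then have "?RA \<subset> ?RB" using i k B by blast
  then have "card ?RA < card ?RB" using \<open>finite J\<close> by (simp add: psubset_card_mono)
  then show False using most[of B] by simp
qed

lemma ex_separating_head_attr: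
  assumes wf: "wf_cq I att H" and nonvac: "\<forall>i\<in>I. att i \<noteq> {}" and "H \<noteq> {}"
    and no_strand: "\<not> strand I att H" and hier: "head_join_hierarchical I att H"
  obtains A where "A \<in> H" "\<exists>i. non_dominated I att H i \<and> A \<in> att i"
    and "\<And>i k. non_dominated I att H i \<Longrightarrow> non_dominated I att H k \<Longrightarrow>
                A \<in> att i \<Longrightarrow> A \<notin> att k \<Longrightarrow> att i \<inter> att k = {}"
proof -
  let ?N = "{i. non_dominated I att H i}"
  let ?count = "\<lambda>B. card {i\<in>?N. B \<in> att i \<inter> H}"
  have finN: "finite ?N"
    using wf unfolding wf_cq_def non_dominated_def by (simp add: finite_subset subset_eq)
  obtain A where most: "\<And>B. ?count B \<le> ?count A"
    using ex_most_frequent[OF finN, of "\<lambda>i. att i \<inter> H"] by blast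
  obtain i0 B where "non_dominated I att H i0" "B \<in> att i0 \<inter> H"
    using ex_non_dominated_meets_head[OF wf \<open>H \<noteq> {}\<close> nonvac] by blast
  then have "?count B \<noteq> 0" using finN by (simp add: card_eq_0_iff) blast
  then have "?count A \<noteq> 0" using most[of B] by linarith
  then have "{i\<in>?N. A \<in> att i \<inter> H} \<noteq> {}" by (metis card.empty)
  then obtain i where i: "non_dominated I att H i" "A \<in> att i" "A \<in> H" by blast
  have "att i \<inter> att k = {}"
    if nd: "non_dominated I att H i" "non_dominated I att H k" and A: "A \<in> att i" "A \<notin> att k"
    for i k
  proof -
    have "att i \<inter> H \<inter> (att k \<inter> H) = {}"
      using hierarchical_most_frequent_disjoint[OF hier[unfolded head_join_hierarchical_def]
          finN most] nd A i(3) by simp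
    moreover have "H \<inter> att i \<noteq> H \<inter> att k" using A \<open>A \<in> H\<close> by blast
    then have "(att i \<inter> att k) - H = {}" using no_strand nd unfolding strand_def by blast
    ultimately show ?thesis by blast
  qed
  with i that show ?thesis by blast
qed

lemma dominated_closure_separated:
  assumes wf: "wf_cq I att H" and nonvac: "\<forall>i\<in>I. att i \<noteq> {}"
    and M: "\<And>i. i \<in> M \<Longrightarrow> non_dominated I att H i"
    and sep: "\<And>i k. i \<in> M \<Longrightarrow> non_dominated I att H k \<Longrightarrow> k \<notin> M \<Longrightarrow> att i \<inter> att k = {}"
    and j: "j \<in> I" "i \<in> M" "i = j \<or> dominated_by I att H j i"
    and j': "j' \<in> I" "\<forall>i\<in>M. i \<noteq> j' \<and> \<not> dominated_by I att H j' i"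
  shows "att j \<inter> att j' = {}"
proof -
  obtain i' where i': "non_dominated I att H i'" "i' = j' \<or> dominated_by I att H j' i'"
    using ex_non_dominated_below[OF wf j'(1)] by blast
  have "i' \<notin> M" using i' j'(2) by blast
  have "i \<in> I" "i' \<in> I" using M j(2) i'(1) unfolding non_dominated_def by auto
  have "att i \<inter> att i' = {}" using sep[OF j(2) i'(1) \<open>i' \<notin> M\<close>] .
  then have "att j \<inter> att i' = {}"
    using j(3) dominated_by_disjoint[OF _ \<open>i' \<in> I\<close>] nonvac \<open>i \<in> I\<close> by metis
  then have "att i' \<inter> att j = {}" by blast
  then show ?thesis
    using i'(2) dominated_by_disjoint[OF _ j(1)] nonvac \<open>i' \<in> I\<close> by (metis inf_commute)
qed

lemma connected_cq_separated:
  assumes conn: "connected_cq I att" and "l \<in> L" "L \<subseteq> I" "r \<in> I"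
    and sep: "\<And>j j'. j \<in> L \<Longrightarrow> j' \<in> I - L \<Longrightarrow> att j \<inter> att j' = {}"
  shows "r \<in> L"
proof -
  obtain xs where xs: "is_path I att UNIV xs" "hd xs = l" "last xs = r"
    using conn assms(2-4) unfolding connected_cq_def path_between_def by blast
  have "xs ! k \<in> L" if "k < length xs" for k
    using that
  proof (induction k)
    case 0
    then show ?case using xs(2) \<open>l \<in> L\<close> by (simp add: hd_conv_nth)
  next
    case (Suc k)
    then have "att (xs ! k) \<inter> att (xs ! Suc k) \<noteq> {}" "xs ! Suc k \<in> I"
      using xs(1) unfolding is_path_def by auto
    then show ?case using Suc sep by force
  qed
  moreover have "xs \<noteq> []" using xs(1) unfolding is_path_def by blast
  ultimately have "xs ! (length xs - 1) \<in> L" by simp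
  then show ?thesis using xs(3) \<open>xs \<noteq> []\<close> by (simp add: last_conv_nth)
qed

lemma connected_cq_non_dominated_block:
  assumes wf: "wf_cq I att H" and nonvac: "\<forall>i\<in>I. att i \<noteq> {}" and conn: "connected_cq I att"
    and M: "\<And>i. i \<in> M \<Longrightarrow> non_dominated I att H i" and "M \<noteq> {}"
    and sep: "\<And>i k. i \<in> M \<Longrightarrow> non_dominated I att H k \<Longrightarrow> k \<notin> M \<Longrightarrow> att i \<inter> att k = {}"
    and r: "non_dominated I att H r"
  shows "r \<in> M"
proof -
  define L where "L = {j\<in>I. \<exists>i\<in>M. i = j \<or> dominated_by I att H j i}"
  have "M \<subseteq> L" "L \<subseteq> I" "r \<in> I"
    using M r unfolding L_def non_dominated_def by auto
  have "att j \<inter> att j' = {}" if "j \<in> L" "j' \<in> I - L" for j j'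
  proof -
    obtain i where "j \<in> I" "i \<in> M" "i = j \<or> dominated_by I att H j i"
      using \<open>j \<in> L\<close> unfolding L_def by blast
    moreover have "j' \<in> I" "\<forall>i\<in>M. i \<noteq> j' \<and> \<not> dominated_by I att H j' i"
      using \<open>j' \<in> I - L\<close> unfolding L_def by auto
    ultimately show ?thesis using dominated_closure_separated[OF wf nonvac M sep] by blast
  qed
  then have "r \<in> L"
    using connected_cq_separated[OF conn _ \<open>L \<subseteq> I\<close> \<open>r \<in> I\<close>] \<open>M \<subseteq> L\<close> \<open>M \<noteq> {}\<close> by blast
  then obtain i where "i \<in> M" "i = r \<or> dominated_by I att H r i" unfolding L_def by blast
  moreover have "i \<in> I" using M \<open>i \<in> M\<close> unfolding non_dominated_def by blast
  ultimately show ?thesis using r unfolding non_dominated_def by (cases "i = r") auto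
qed

theorem lemma16:
  fixes I :: "'r set" and att :: "'r \<Rightarrow> 'a set" and H :: "'a set"
  assumes "wf_cq I att H"
    and "connected_cq I att"
    and "\<not> is_boolean H"
    and "\<forall>A. \<not> universal_attr I att H A"
    and "\<forall>i\<in>I. \<not> vacuum att i"
  shows "hard_structure I att H"
proof (rule ccontr)
  assume "\<not> hard_structure I att H"
  then have no_strand: "\<not> strand I att H" and hier: "head_join_hierarchical I att H"
    unfolding hard_structure_def by auto
  have nonvac: "\<forall>i\<in>I. att i \<noteq> {}" and "H \<noteq> {}"
    using assms(3,5) unfolding vacuum_def is_boolean_def by auto
  obtain A where "A \<in> H" and block: "\<exists>i. non_dominated I att H i \<and> A \<in> att i" and
    sep: "\<And>i k. non_dominated I att H i \<Longrightarrow> non_dominated I att H k \<Longrightarrow>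
                A \<in> att i \<Longrightarrow> A \<notin> att k \<Longrightarrow> att i \<inter> att k = {}"
    using ex_separating_head_attr[OF assms(1) nonvac \<open>H \<noteq> {}\<close> no_strand hier] by blast
  obtain j where "j \<in> I" "A \<notin> att j"
    using assms(4) \<open>A \<in> H\<close> unfolding universal_attr_def by blast
  then obtain r where r: "non_dominated I att H r" "A \<notin> att r"
    using ex_non_dominated_below[OF assms(1)] unfolding dominated_by_def by blast
  have "r \<in> {i. non_dominated I att H i \<and> A \<in> att i}"
  proof (rule connected_cq_non_dominated_block[OF assms(1) nonvac assms(2)])
    show "att i \<inter> att k = {}"
      if "i \<in> {i. non_dominated I att H i \<and> A \<in> att i}" "non_dominated I att H k"
        "k \<notin> {i. non_dominated I att H i \<and> A \<in> att i}" for i k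
      using sep that by blast
  qed (use block r in auto)
  then show False using r(2) by blast
qed

end
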